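(* Let $k,n$ be positive integers and $\gamma>0$. Let $\preceq_k$ be a quasi-order on $[k]=\{1,\dots,k\}$ and $\preceq$ a quasi-order on $[kn]$. Assume that there are at least $\gamma k n^k$ tuples $(s_1,\dots,s_k)\in\prod_{i=1}^k[(i-1)n+1,in]$ such that $s_i\preceq s_j\iff i\preceq_k j$ for all $i,j\in[k]$. Then there are sets $S_i\subseteq[(i-1)n+1,in]$ ($1\le i\le k$), each of size at least $\gamma n$, such that for every tuple $(s_1,\dots,s_k)\in\prod_{i=1}^k S_i$ and all $i,j\in[k]$ we have $s_i\preceq s_j\iff i\preceq_k j$.
   Context: A quasi-order here means a total preorder (a reflexive, transitive and total relation). $[a,b]$ denotes the set of integers $m$ with $a\le m\le b$. *)

theory Defs
  imports Complex_Main "HOL-Library.FuncSet"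
begin

definition quasi_order_on :: "'a set \<Rightarrow> 'a rel \<Rightarrow> bool" where
  "quasi_order_on A r \<longleftrightarrow> preorder_on A r \<and> total_on A r"

end

(*
  Replace the two quasi-orders by their rank functions g on the indices and f on the values; a
  tuple is good when f reproduces on it the order pattern of g. Induct on the number of
  coordinates. Let C be the bottom class of g: in a good tuple the coordinates in C share one
  f-level, which lies below all the other coordinates. Take the least r such that the blocks of C
  contain large sets of values of level at most r on which every tuple is flat (for |C| = 1 a
  large initial segment, for |C| > 1 large level sets at a common level). Good tuples whose
  C-level is below r are few, because one of their coordinates in C lies in a small set: the
  values below r if |C| = 1, otherwise a small level set fixed by another coordinate of C.
  The remaining good tuples restrict to good tuples on the
  other coordinates with all values above r. If those are many, induction gives large sets above
  r, which together with the sets found for C are the required sets; otherwise there are fewer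
  than gamma k n^k good tuples in total. The size bound gamma n is carried as a parameter m, so
  the count to beat is m k n^(k-1).
*)
theory Submission
  imports Defs
begin

lemma card_PiE_le_power:
  assumes "finite I" "\<forall>i\<in>I. card (B i) \<le> n"
  shows "card (Pi\<^sub>E I B) \<le> n ^ card I"
proof -
  have "card (Pi\<^sub>E I B) = (\<Prod>i\<in>I. card (B i))" using assms(1) by (rule card_PiE)
  also have "\<dots> \<le> (\<Prod>i\<in>I. n)" using assms(2) by (intro prod_mono) auto
  finally show ?thesis by simp
qed

lemma card_PiE_restrict_le:
  assumes "finite I" "I = J \<union> K" "\<forall>i\<in>I. finite (B i)"
  shows "card {s \<in> Pi\<^sub>E I B. P (restrict s J)} \<le> card {t \<in> Pi\<^sub>E J B. P t} * card (Pi\<^sub>E K B)"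
proof -
  let ?split = "\<lambda>s. (restrict s J, restrict s K)"
  have "inj_on ?split (Pi\<^sub>E I B)"
  proof (rule inj_onI)
    fix s s' assume s: "s \<in> Pi\<^sub>E I B" "s' \<in> Pi\<^sub>E I B" and "?split s = ?split s'"
    then have "restrict s J = restrict s' J" "restrict s K = restrict s' K" by auto
    then have "s i = s' i" if "i \<in> J \<union> K" for i
      using that by (metis Un_iff restrict_apply')
    with s show "s = s'" using assms(2) by (intro PiE_ext) auto
  qed
  then have "inj_on ?split {s \<in> Pi\<^sub>E I B. P (restrict s J)}"
    by (rule inj_on_subset) auto
  moreover have "?split ` {s \<in> Pi\<^sub>E I B. P (restrict s J)} \<subseteq> {t \<in> Pi\<^sub>E J B. P t} \<times> Pi\<^sub>E K B"
    using assms(2) by (auto simp: PiE_iff)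
  moreover have "finite ({t \<in> Pi\<^sub>E J B. P t} \<times> Pi\<^sub>E K B)"
    using assms by (simp add: finite_PiE)
  ultimately have "card {s \<in> Pi\<^sub>E I B. P (restrict s J)} \<le> card ({t \<in> Pi\<^sub>E J B. P t} \<times> Pi\<^sub>E K B)"
    by (rule card_inj_on_le)
  then show ?thesis by (simp add: card_cartesian_product)
qed

lemma card_PiE_dependent_coordinate_less:
  fixes c :: real
  assumes "finite I" "j \<in> I" "j' \<in> I" "j \<noteq> j'" "\<forall>i\<in>I. finite (B i) \<and> card (B i) \<le> n" "0 < n"
    and "\<forall>x. Y x \<subseteq> B j" "\<forall>x\<in>B j'. card (Y x) < c" "0 < c"
  shows "card {s \<in> Pi\<^sub>E I B. s j \<in> Y (s j')} < c * real n ^ (card I - 1)"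
proof -
  define B' where "B' x = B(j := Y x, j' := {x})" for x
  have I: "I = insert j (insert j' (I - {j, j'}))" using assms(2,3) by auto
  have card_slice: "card (Pi\<^sub>E I (B' x)) \<le> card (Y x) * n ^ (card I - 2)" for x
  proof -
    have "card (Pi\<^sub>E I (B' x)) = (\<Prod>i\<in>insert j (insert j' (I - {j, j'})). card (B' x i))"
      using assms(1) I by (metis card_PiE)
    also have "\<dots> = card (Y x) * (\<Prod>i\<in>I - {j, j'}. card (B i))"
      using assms(1,4) by (simp add: B'_def)
    also have "\<dots> \<le> card (Y x) * (\<Prod>i\<in>I - {j, j'}. n)"
      using assms(5) by (intro mult_left_mono prod_mono) auto
    also have "\<dots> = card (Y x) * n ^ (card I - 2)"
      using assms(1-4) by (simp add: card_Diff_subset numeral_2_eq_2)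
    finally show ?thesis .
  qed
  show ?thesis
  proof (cases "B j' = {}")
    case True
    then have "{s \<in> Pi\<^sub>E I B. s j \<in> Y (s j')} = {}" using assms(3) by (auto simp: PiE_iff)
    then show ?thesis using assms(6,9) by (simp only: card.empty) simp
  next
    case False
    have "{s \<in> Pi\<^sub>E I B. s j \<in> Y (s j')} \<subseteq> (\<Union>x\<in>B j'. Pi\<^sub>E I (B' x))"
    proof
      fix s assume s: "s \<in> {s \<in> Pi\<^sub>E I B. s j \<in> Y (s j')}"
      then have "s \<in> Pi\<^sub>E I (B' (s j'))" "s j' \<in> B j'"
        using assms(3) by (auto simp: B'_def PiE_iff)
      then show "s \<in> (\<Union>x\<in>B j'. Pi\<^sub>E I (B' x))" by blast
    qed
    moreover have "finite (Pi\<^sub>E I (B' x))" for x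
      using assms(1,5,7) finite_subset[of "Y x" "B j"] by (auto simp: B'_def intro!: finite_PiE)
    ultimately have "card {s \<in> Pi\<^sub>E I B. s j \<in> Y (s j')} \<le> card (\<Union>x\<in>B j'. Pi\<^sub>E I (B' x))"
      using assms(3,5) by (intro card_mono) auto
    also have "\<dots> \<le> (\<Sum>x\<in>B j'. card (Pi\<^sub>E I (B' x)))"
      using assms(3,5) by (intro card_UN_le) auto
    also have "\<dots> \<le> (\<Sum>x\<in>B j'. card (Y x) * n ^ (card I - 2))"
      by (intro sum_mono card_slice)
    finally have "real (card {s \<in> Pi\<^sub>E I B. s j \<in> Y (s j')}) \<le> real (\<Sum>x\<in>B j'. card (Y x) * n ^ (card I - 2))"
      by (rule of_nat_mono)
    also have "\<dots> = (\<Sum>x\<in>B j'. real (card (Y x)) * real n ^ (card I - 2))"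
      by simp
    also have "\<dots> < (\<Sum>x\<in>B j'. c * real n ^ (card I - 2))"
      using False assms(3,5,6,8) by (intro sum_strict_mono) auto
    also have "\<dots> = real (card (B j')) * (c * real n ^ (card I - 2))"
      by simp
    also have "\<dots> \<le> real n * (c * real n ^ (card I - 2))"
      using assms(3,5,9) by (intro mult_right_mono) auto
    also have "\<dots> = c * real n ^ (card I - 1)"
    proof -
      have "2 \<le> card I" using card_mono[of I "{j, j'}"] assms(1-4) by simp
      then show ?thesis by (simp add: power_eq_if numeral_2_eq_2)
    qed
    finally show ?thesis .
  qed
qed

definition realizes_pattern :: "('i \<Rightarrow> nat) \<Rightarrow> ('a \<Rightarrow> nat) \<Rightarrow> 'i set \<Rightarrow> ('i \<Rightarrow> 'a) \<Rightarrow> bool" where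
  "realizes_pattern g f I s \<longleftrightarrow> (\<forall>i\<in>I. \<forall>j\<in>I. g i \<le> g j \<longleftrightarrow> f (s i) \<le> f (s j))"

definition flat_on :: "('a \<Rightarrow> nat) \<Rightarrow> 'i set \<Rightarrow> ('i \<Rightarrow> 'a) \<Rightarrow> bool" where
  "flat_on f C t \<longleftrightarrow> (\<forall>i\<in>C. \<forall>j\<in>C. f (t i) = f (t j))"

lemma flat_on_restrict [simp]: "flat_on f C (restrict s C) \<longleftrightarrow> flat_on f C s"
  by (simp add: flat_on_def)

definition large_flat_family :: "('a \<Rightarrow> nat) \<Rightarrow> 'i set \<Rightarrow> ('i \<Rightarrow> 'a set) \<Rightarrow> real \<Rightarrow> nat \<Rightarrow> bool" where
  "large_flat_family f C B m r \<longleftrightarrow>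
     (\<exists>S. (\<forall>j\<in>C. S j \<subseteq> {x \<in> B j. f x \<le> r} \<and> m \<le> card (S j)) \<and> (\<forall>t\<in>Pi\<^sub>E C S. flat_on f C t))"

definition large_pattern_sets :: "('i \<Rightarrow> nat) \<Rightarrow> ('a \<Rightarrow> nat) \<Rightarrow> 'i set \<Rightarrow> ('i \<Rightarrow> 'a set) \<Rightarrow> real \<Rightarrow> bool" where
  "large_pattern_sets g f I B m \<longleftrightarrow>
     (\<exists>S. (\<forall>i\<in>I. S i \<subseteq> B i \<and> m \<le> card (S i)) \<and> (\<forall>s\<in>Pi\<^sub>E I S. realizes_pattern g f I s))"

lemma realizes_pattern_eq:
  assumes "realizes_pattern g f I s" "i \<in> I" "j \<in> I" "g i = g j"
  shows "f (s i) = f (s j)"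
  using assms unfolding realizes_pattern_def by (metis order_antisym order_refl)

lemma realizes_pattern_less:
  assumes "realizes_pattern g f I s" "i \<in> I" "j \<in> I" "g i < g j"
  shows "f (s i) < f (s j)"
  using assms unfolding realizes_pattern_def by (meson not_le)

lemma realizes_pattern_restrict [simp]:
  "realizes_pattern g f J (restrict s J) \<longleftrightarrow> realizes_pattern g f J s"
  by (simp add: realizes_pattern_def)

lemma realizes_pattern_subset:
  "realizes_pattern g f I s \<Longrightarrow> J \<subseteq> I \<Longrightarrow> realizes_pattern g f J s"
  unfolding realizes_pattern_def by blast

lemma realizes_pattern_glue_bottom:
  assumes "C \<subseteq> I" "\<forall>i\<in>C. \<forall>j\<in>C. g i = g j" "\<forall>i\<in>C. \<forall>j\<in>I - C. g i < g j"
    and "flat_on f C s" "\<forall>i\<in>C. f (s i) \<le> r" "\<forall>i\<in>I - C. r < f (s i)"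
    and "realizes_pattern g f (I - C) s"
  shows "realizes_pattern g f I s"
  unfolding realizes_pattern_def
proof (intro ballI)
  fix i j assume "i \<in> I" "j \<in> I"
  then consider "i \<in> C" "j \<in> C" | "i \<in> C" "j \<in> I - C" | "i \<in> I - C" "j \<in> C" | "i \<in> I - C" "j \<in> I - C"
    by blast
  then show "g i \<le> g j \<longleftrightarrow> f (s i) \<le> f (s j)"
  proof cases
    case 1
    then have "g i = g j" "f (s i) = f (s j)" using assms(2,4) unfolding flat_on_def by blast+
    then show ?thesis by simp
  next
    case 2
    then have "g i < g j" "f (s i) \<le> r" "r < f (s j)" using assms(3,5,6) by blast+
    then show ?thesis by linarith
  next
    case 3
    then have "g j < g i" "f (s j) \<le> r" "r < f (s i)" using assms(3,5,6) by blast+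
    then show ?thesis by linarith
  next
    case 4
    then show ?thesis using assms(7) unfolding realizes_pattern_def by blast
  qed
qed

lemma large_pattern_sets_glue_bottom:
  assumes "C \<subseteq> I" "\<forall>i\<in>C. \<forall>j\<in>C. g i = g j" "\<forall>i\<in>C. \<forall>j\<in>I - C. g i < g j"
    and "large_flat_family f C B m r"
    and "large_pattern_sets g f (I - C) (\<lambda>i. {x \<in> B i. r < f x}) m"
  shows "large_pattern_sets g f I B m"
proof -
  obtain SC where SC: "\<forall>j\<in>C. SC j \<subseteq> {x \<in> B j. f x \<le> r} \<and> m \<le> card (SC j)"
    and flat: "\<forall>t\<in>Pi\<^sub>E C SC. flat_on f C t"
    using assms(4) unfolding large_flat_family_def by blast
  obtain S' where S': "\<forall>i\<in>I - C. S' i \<subseteq> {x \<in> B i. r < f x} \<and> m \<le> card (S' i)"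
    and pattern: "\<forall>s\<in>Pi\<^sub>E (I - C) S'. realizes_pattern g f (I - C) s"
    using assms(5) unfolding large_pattern_sets_def by blast
  define S where "S i = (if i \<in> C then SC i else S' i)" for i
  have "realizes_pattern g f I s" if s: "s \<in> Pi\<^sub>E I S" for s
  proof (rule realizes_pattern_glue_bottom[OF assms(1-3)])
    have sC: "s i \<in> SC i" if "i \<in> C" for i
      using PiE_mem[OF s, of i] that assms(1) by (auto simp: S_def)
    have sI: "s i \<in> S' i" if "i \<in> I - C" for i
      using PiE_mem[OF s, of i] that by (auto simp: S_def)
    have "restrict s C \<in> Pi\<^sub>E C SC" "restrict s (I - C) \<in> Pi\<^sub>E (I - C) S'"
      using sC sI by (simp_all add: restrict_PiE_iff)
    then have "flat_on f C (restrict s C)" "realizes_pattern g f (I - C) (restrict s (I - C))"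
      using flat pattern by blast+
    then show "flat_on f C s" "realizes_pattern g f (I - C) s" by simp_all
    show "\<forall>i\<in>C. f (s i) \<le> r" "\<forall>i\<in>I - C. r < f (s i)"
      using sC sI SC S' by blast+
  qed
  moreover have "\<forall>i\<in>I. S i \<subseteq> B i \<and> m \<le> card (S i)"
    using SC S' by (auto simp: S_def)
  ultimately show ?thesis unfolding large_pattern_sets_def by blast
qed

lemma card_flat_tuples_below_less_singleton:
  fixes m :: real
  assumes "finite (B c)" "0 < m" "\<forall>w<r. \<not> large_flat_family f {c} B m w"
  shows "card {t \<in> Pi\<^sub>E {c} B. flat_on f {c} t \<and> (\<forall>j\<in>{c}. f (t j) < r)} < m"
proof -
  have "{t \<in> Pi\<^sub>E {c} B. flat_on f {c} t \<and> (\<forall>j\<in>{c}. f (t j) < r)} \<subseteq> Pi\<^sub>E {c} (\<lambda>j. {x \<in> B j. f x < r})"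
    by (auto simp: PiE_iff extensional_def)
  then have "card {t \<in> Pi\<^sub>E {c} B. flat_on f {c} t \<and> (\<forall>j\<in>{c}. f (t j) < r)}
      \<le> card (Pi\<^sub>E {c} (\<lambda>j. {x \<in> B j. f x < r}))"
    using assms(1) by (intro card_mono finite_PiE) auto
  also have "\<dots> = card {x \<in> B c. f x < r}"
    by (simp add: card_PiE)
  moreover have "card {x \<in> B c. f x < r} < m"
  proof (cases r)
    case 0
    then show ?thesis using assms(2) by simp
  next
    case (Suc w)
    have "\<not> m \<le> card {x \<in> B c. f x \<le> w}"
    proof
      assume "m \<le> card {x \<in> B c. f x \<le> w}"
      then have "large_flat_family f {c} B m w"
        unfolding large_flat_family_def
        by (intro exI[of _ "\<lambda>j. {x \<in> B j. f x \<le> w}"]) (simp add: flat_on_def)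
      then show False using assms(3) Suc by simp
    qed
    moreover have "{x \<in> B c. f x \<le> w} = {x \<in> B c. f x < r}" using Suc by auto
    ultimately show ?thesis by simp
  qed
  ultimately show ?thesis by linarith
qed

lemma card_flat_tuples_below_less_nonsingleton:
  fixes m :: real
  assumes "2 \<le> card C" "\<forall>j\<in>C. finite (B j) \<and> card (B j) \<le> n" "0 < n" "0 < m"
    and "\<forall>w<r. \<not> large_flat_family f C B m w"
  shows "card {t \<in> Pi\<^sub>E C B. flat_on f C t \<and> (\<forall>j\<in>C. f (t j) < r)} < m * card C * real n ^ (card C - 1)"
proof -
  have C: "finite C" "C \<noteq> {}" using assms(1) by (auto intro: card_ge_0_finite)
  have "\<exists>j'\<in>C. j' \<noteq> j" if "j \<in> C" for j
  proof (rule ccontr)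
    assume "\<not> (\<exists>j'\<in>C. j' \<noteq> j)"
    then have "C = {j}" using that by blast
    then show False using assms(1) by simp
  qed
  then obtain p where p: "p j \<in> C" "p j \<noteq> j" if "j \<in> C" for j by metis
  \<comment> \<open>below the threshold, at the common level of a flat tuple t some block B j has a
     small level set, and t j lies in the level set of t (p j)\<close>
  define Y where "Y j x = (if card {y \<in> B j. f y = f x} < m then {y \<in> B j. f y = f x} else {})" for j x
  define T where "T j = {t \<in> Pi\<^sub>E C B. t j \<in> Y j (t (p j))}" for j
  have "{t \<in> Pi\<^sub>E C B. flat_on f C t \<and> (\<forall>j\<in>C. f (t j) < r)} \<subseteq> (\<Union>j\<in>C. T j)"
  proof
    fix t assume t: "t \<in> {t \<in> Pi\<^sub>E C B. flat_on f C t \<and> (\<forall>j\<in>C. f (t j) < r)}"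
    obtain c where c: "c \<in> C" using C(2) by blast
    define w where "w = f (t c)"
    have "\<not> (\<forall>j\<in>C. m \<le> card {x \<in> B j. f x = w})"
    proof
      assume large: "\<forall>j\<in>C. m \<le> card {x \<in> B j. f x = w}"
      have "flat_on f C u" if "u \<in> Pi\<^sub>E C (\<lambda>j. {x \<in> B j. f x = w})" for u
        using PiE_mem[OF that] unfolding flat_on_def by fastforce
      with large have "large_flat_family f C B m w"
        unfolding large_flat_family_def by (intro exI[of _ "\<lambda>j. {x \<in> B j. f x = w}"]) auto
      then show False using assms(5) t c unfolding w_def by blast
    qed
    then obtain j where j: "j \<in> C" "\<not> m \<le> card {x \<in> B j. f x = w}" by blast
    have "f (t j) = w" "f (t (p j)) = w"
      using t c j(1) p[OF j(1)] unfolding w_def flat_on_def by blast+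
    moreover have "t j \<in> B j" using t j(1) by (blast dest: PiE_mem)
    ultimately have "t j \<in> Y j (t (p j))" using j(2) unfolding Y_def by simp
    then show "t \<in> (\<Union>j\<in>C. T j)" using t j(1) unfolding T_def by blast
  qed
  moreover have "finite (Pi\<^sub>E C B)" using C(1) assms(2) by (intro finite_PiE) auto
  ultimately have "card {t \<in> Pi\<^sub>E C B. flat_on f C t \<and> (\<forall>j\<in>C. f (t j) < r)} \<le> card (\<Union>j\<in>C. T j)"
    using C(1) by (intro card_mono) (auto simp: T_def)
  also have "\<dots> \<le> (\<Sum>j\<in>C. card (T j))"
    using C(1) by (rule card_UN_le)
  finally have "real (card {t \<in> Pi\<^sub>E C B. flat_on f C t \<and> (\<forall>j\<in>C. f (t j) < r)}) \<le> (\<Sum>j\<in>C. real (card (T j)))"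
    by (simp flip: of_nat_sum)
  also have "\<dots> < (\<Sum>j\<in>C. m * real n ^ (card C - 1))"
  proof (rule sum_strict_mono)
    fix j assume "j \<in> C"
    show "real (card (T j)) < m * real n ^ (card C - 1)"
      unfolding T_def using C(1) assms(2-4) \<open>j \<in> C\<close> p[OF \<open>j \<in> C\<close>]
      by (intro card_PiE_dependent_coordinate_less) (auto simp: Y_def)
  qed (use C in auto)
  also have "\<dots> = m * card C * real n ^ (card C - 1)"
    by simp
  finally show ?thesis .
qed

lemma card_flat_tuples_below_less:
  fixes m :: real
  assumes "finite C" "C \<noteq> {}" "\<forall>j\<in>C. finite (B j) \<and> card (B j) \<le> n" "0 < n" "0 < m"
    and "\<forall>w<r. \<not> large_flat_family f C B m w"
  shows "card {t \<in> Pi\<^sub>E C B. flat_on f C t \<and> (\<forall>j\<in>C. f (t j) < r)} < m * card C * real n ^ (card C - 1)"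
proof (cases "card C = 1")
  case True
  then obtain c where "C = {c}" by (rule card_1_singletonE)
  then show ?thesis using card_flat_tuples_below_less_singleton[of B c m r f] assms(3,5,6) by simp
next
  case False
  moreover have "card C \<noteq> 0" using assms(1,2) by simp
  ultimately have "2 \<le> card C" by linarith
  then show ?thesis using assms(3-6) by (rule card_flat_tuples_below_less_nonsingleton)
qed

lemma flat_family_threshold:
  fixes m :: real
  assumes "finite C" "C \<noteq> {}" "\<forall>j\<in>C. finite (B j) \<and> card (B j) \<le> n" "0 < n" "0 < m"
  obtains r where "card {t \<in> Pi\<^sub>E C B. flat_on f C t \<and> (\<forall>j\<in>C. f (t j) < r)} < m * card C * real n ^ (card C - 1)"
    and "(\<forall>j\<in>C. \<forall>x\<in>B j. f x < r) \<or> large_flat_family f C B m r"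
proof (cases "\<exists>r. large_flat_family f C B m r")
  case True
  define r where "r = (LEAST r. large_flat_family f C B m r)"
  have "large_flat_family f C B m r" unfolding r_def using True by (rule LeastI_ex)
  moreover have "\<forall>w<r. \<not> large_flat_family f C B m w" unfolding r_def by (blast dest: not_less_Least)
  ultimately show ?thesis using that card_flat_tuples_below_less[OF assms] by blast
next
  case False
  define r where "r = Suc (Max (f ` (\<Union>j\<in>C. B j)))"
  have "\<forall>j\<in>C. \<forall>x\<in>B j. f x < r"
    unfolding r_def using assms(1,3) by (auto intro!: le_imp_less_Suc Max_ge)
  then show ?thesis using that card_flat_tuples_below_less[OF assms] False by blast
qed

lemma obtain_bottom_class:
  fixes g :: "'i \<Rightarrow> 'b::linorder"
  assumes "finite I" "I \<noteq> {}"
  obtains C where "C \<subseteq> I" "C \<noteq> {}" "\<forall>i\<in>C. \<forall>j\<in>C. g i = g j" "\<forall>i\<in>C. \<forall>j\<in>I - C. g i < g j"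
proof -
  have "Min (g ` I) \<in> g ` I" using assms by simp
  then obtain c where c: "c \<in> I" "g c = Min (g ` I)" by (metis imageE)
  have le: "g c \<le> g i" if "i \<in> I" for i using assms(1) that c(2) by simp
  show ?thesis
  proof (rule that[of "{i \<in> I. g i = g c}"])
    show "\<forall>i\<in>{i \<in> I. g i = g c}. \<forall>j\<in>I - {i \<in> I. g i = g c}. g i < g j"
      using le by (auto simp: order.strict_iff_order)
  qed (use c(1) in auto)
qed

lemma card_pattern_tuples_bottom_below:
  fixes m :: real
  assumes "finite I" "C \<subseteq> I" "c \<in> C" "\<forall>i\<in>C. \<forall>j\<in>C. g i = g j"
    and "\<forall>i\<in>I. finite (B i) \<and> card (B i) \<le> n" "0 < n"
    and "card {t \<in> Pi\<^sub>E C B. flat_on f C t \<and> (\<forall>j\<in>C. f (t j) < r)} < m * card C * real n ^ (card C - 1)"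
  shows "card {s \<in> Pi\<^sub>E I B. realizes_pattern g f I s \<and> f (s c) < r} < m * card C * real n ^ (card I - 1)"
proof -
  let ?P = "\<lambda>t. flat_on f C t \<and> (\<forall>j\<in>C. f (t j) < r)"
  have "{s \<in> Pi\<^sub>E I B. realizes_pattern g f I s \<and> f (s c) < r} \<subseteq> {s \<in> Pi\<^sub>E I B. ?P (restrict s C)}"
  proof
    fix s assume "s \<in> {s \<in> Pi\<^sub>E I B. realizes_pattern g f I s \<and> f (s c) < r}"
    then have s: "s \<in> Pi\<^sub>E I B" "realizes_pattern g f I s" "f (s c) < r" by auto
    have "f (s i) = f (s c)" if "i \<in> C" for i
      using that assms(2-4) by (intro realizes_pattern_eq[OF s(2)]) blast+
    with s show "s \<in> {s \<in> Pi\<^sub>E I B. ?P (restrict s C)}" by (simp add: flat_on_def)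
  qed
  moreover have "finite (Pi\<^sub>E I B)" using assms(1,5) by (intro finite_PiE) auto
  ultimately have "card {s \<in> Pi\<^sub>E I B. realizes_pattern g f I s \<and> f (s c) < r}
      \<le> card {s \<in> Pi\<^sub>E I B. ?P (restrict s C)}"
    by (intro card_mono) auto
  also have "\<dots> \<le> card {t \<in> Pi\<^sub>E C B. ?P t} * card (Pi\<^sub>E (I - C) B)"
    using assms(1,2,5) by (intro card_PiE_restrict_le) auto
  also have "\<dots> \<le> card {t \<in> Pi\<^sub>E C B. ?P t} * n ^ card (I - C)"
    using assms(1,5) by (intro mult_left_mono card_PiE_le_power) auto
  finally have "real (card {s \<in> Pi\<^sub>E I B. realizes_pattern g f I s \<and> f (s c) < r})
      \<le> real (card {t \<in> Pi\<^sub>E C B. ?P t} * n ^ card (I - C))"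
    by (rule of_nat_mono)
  also have "\<dots> = card {t \<in> Pi\<^sub>E C B. ?P t} * real n ^ card (I - C)"
    by simp
  also have "\<dots> < m * card C * real n ^ (card C - 1) * real n ^ card (I - C)"
    using assms(6,7) by (intro mult_strict_right_mono) auto
  also have "\<dots> = m * card C * real n ^ (card I - 1)"
  proof -
    have "card I = card C + card (I - C)" "0 < card C"
      using assms(1-3) by (auto simp: card_Diff_subset card_mono card_gt_0_iff finite_subset)
    then have "card I - 1 = (card C - 1) + card (I - C)" by linarith
    then show ?thesis by (simp add: power_add)
  qed
  finally show ?thesis .
qed

lemma card_pattern_tuples_bottom_above:
  fixes m :: real
  assumes "finite I" "C \<subseteq> I" "c \<in> C" "\<forall>i\<in>C. \<forall>j\<in>I - C. g i < g j"
    and "\<forall>i\<in>I. finite (B i) \<and> card (B i) \<le> n"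
    and "card {s \<in> Pi\<^sub>E (I - C) (\<lambda>i. {x \<in> B i. r < f x}). realizes_pattern g f (I - C) s}
      < m * card (I - C) * real n ^ (card (I - C) - 1)"
  shows "card {s \<in> Pi\<^sub>E I B. realizes_pattern g f I s \<and> r \<le> f (s c)} \<le> m * card (I - C) * real n ^ (card I - 1)"
proof -
  let ?B = "\<lambda>i. {x \<in> B i. r < f x}"
  let ?P = "\<lambda>t. t \<in> Pi\<^sub>E (I - C) ?B \<and> realizes_pattern g f (I - C) t"
  have "{s \<in> Pi\<^sub>E I B. realizes_pattern g f I s \<and> r \<le> f (s c)} \<subseteq> {s \<in> Pi\<^sub>E I B. ?P (restrict s (I - C))}"
  proof
    fix s assume "s \<in> {s \<in> Pi\<^sub>E I B. realizes_pattern g f I s \<and> r \<le> f (s c)}"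
    then have s: "s \<in> Pi\<^sub>E I B" "realizes_pattern g f I s" "r \<le> f (s c)" by auto
    have "r < f (s i)" if "i \<in> I - C" for i
      using realizes_pattern_less[OF s(2), of c i] s(3) that assms(2-4) by auto
    then show "s \<in> {s \<in> Pi\<^sub>E I B. ?P (restrict s (I - C))}"
      using s(1,2) by (auto simp: PiE_iff intro: realizes_pattern_subset)
  qed
  moreover have "finite (Pi\<^sub>E I B)" using assms(1,5) by (intro finite_PiE) auto
  ultimately have "card {s \<in> Pi\<^sub>E I B. realizes_pattern g f I s \<and> r \<le> f (s c)}
      \<le> card {s \<in> Pi\<^sub>E I B. ?P (restrict s (I - C))}"
    by (intro card_mono) auto
  also have "\<dots> \<le> card {t \<in> Pi\<^sub>E (I - C) B. ?P t} * card (Pi\<^sub>E C B)"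
    using assms(1,2,5) by (intro card_PiE_restrict_le) auto
  also have "\<dots> \<le> card {t \<in> Pi\<^sub>E (I - C) B. ?P t} * n ^ card C"
    using assms(1,2,5) finite_subset by (intro mult_left_mono card_PiE_le_power) auto
  also have "{t \<in> Pi\<^sub>E (I - C) B. ?P t} = {t \<in> Pi\<^sub>E (I - C) ?B. realizes_pattern g f (I - C) t}"
    by (auto simp: PiE_iff)
  finally have "real (card {s \<in> Pi\<^sub>E I B. realizes_pattern g f I s \<and> r \<le> f (s c)})
      \<le> real (card {t \<in> Pi\<^sub>E (I - C) ?B. realizes_pattern g f (I - C) t} * n ^ card C)"
    by (rule of_nat_mono)
  also have "\<dots> = card {t \<in> Pi\<^sub>E (I - C) ?B. realizes_pattern g f (I - C) t} * real n ^ card C"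
    by simp
  also have "\<dots> \<le> m * card (I - C) * real n ^ (card (I - C) - 1) * real n ^ card C"
    using assms(6) by (intro mult_right_mono) auto
  also have "\<dots> = m * card (I - C) * real n ^ (card I - 1)"
  proof (cases "I - C = {}")
    case False
    have "card I = card C + card (I - C)"
      using assms(1,2) by (simp add: card_Diff_subset card_mono finite_subset)
    moreover have "0 < card (I - C)" using assms(1) False by (simp add: card_gt_0_iff)
    ultimately have "card I - 1 = (card (I - C) - 1) + card C" by linarith
    then show ?thesis by (simp add: power_add)
  next
    case True
    then show ?thesis by (simp only: card.empty)
  qed
  finally show ?thesis .
qed

lemma many_pattern_tuples_imp_large_pattern_sets:
  fixes f :: "'a \<Rightarrow> nat" and g :: "'i \<Rightarrow> nat" and m :: real
  assumes "finite I" "\<forall>i\<in>I. finite (B i) \<and> card (B i) \<le> n" "0 < n" "0 < m"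
    and "m * card I * real n ^ (card I - 1) \<le> card {s \<in> Pi\<^sub>E I B. realizes_pattern g f I s}"
  shows "large_pattern_sets g f I B m"
  using assms
proof (induction "card I" arbitrary: I B rule: less_induct)
  case less
  show ?case
  proof (rule ccontr)
    assume no_sets: "\<not> large_pattern_sets g f I B m"
    then have "I \<noteq> {}" by (auto simp: large_pattern_sets_def realizes_pattern_def)
    with less.prems(1) obtain C where C: "C \<subseteq> I" "C \<noteq> {}"
      and g_C: "\<forall>i\<in>C. \<forall>j\<in>C. g i = g j" "\<forall>i\<in>C. \<forall>j\<in>I - C. g i < g j"
      by (rule obtain_bottom_class)
    obtain c where c: "c \<in> C" using C(2) by blast
    have "finite C" "\<forall>j\<in>C. finite (B j) \<and> card (B j) \<le> n"
      using C(1) less.prems(1,2) finite_subset by auto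
    then obtain r where
      few_low: "card {t \<in> Pi\<^sub>E C B. flat_on f C t \<and> (\<forall>j\<in>C. f (t j) < r)} < m * card C * real n ^ (card C - 1)"
      and high: "(\<forall>j\<in>C. \<forall>x\<in>B j. f x < r) \<or> large_flat_family f C B m r"
      using flat_family_threshold[OF _ C(2) _ less.prems(3,4)] by blast
    define low where "low = {s \<in> Pi\<^sub>E I B. realizes_pattern g f I s \<and> f (s c) < r}"
    define high where "high = {s \<in> Pi\<^sub>E I B. realizes_pattern g f I s \<and> r \<le> f (s c)}"
    have low_bound: "card low < m * card C * real n ^ (card I - 1)"
      unfolding low_def using less.prems(1) C(1) c g_C(1) less.prems(2,3) few_low
      by (rule card_pattern_tuples_bottom_below)
    have high_bound: "card high \<le> m * card (I - C) * real n ^ (card I - 1)"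
    proof (cases "\<forall>j\<in>C. \<forall>x\<in>B j. f x < r")
      case True
      then have "f (s c) < r" if "s \<in> Pi\<^sub>E I B" for s
        using PiE_mem[OF that, of c] C(1) c by blast
      then have "high = {}" unfolding high_def by (auto simp: not_le[symmetric])
      then show ?thesis using less.prems(4) by simp
    next
      case False
      let ?B = "\<lambda>i. {x \<in> B i. r < f x}"
      have "card {s \<in> Pi\<^sub>E (I - C) ?B. realizes_pattern g f (I - C) s} < m * card (I - C) * real n ^ (card (I - C) - 1)"
      proof (rule ccontr)
        have "card (I - C) < card I" using C less.prems(1) by (intro psubset_card_mono) auto
        moreover assume "\<not> ?thesis"
        moreover have "\<forall>i\<in>I - C. finite (?B i) \<and> card (?B i) \<le> n"
          using less.prems(2) by (auto intro: card_mono[THEN order_trans])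
        ultimately have above: "large_pattern_sets g f (I - C) ?B m"
          using less.hyps less.prems(1,3,4) by simp
        from large_pattern_sets_glue_bottom[OF C(1) g_C _ above] high False no_sets
        show False by blast
      qed
      then show ?thesis
        unfolding high_def by (rule card_pattern_tuples_bottom_above[OF less.prems(1) C(1) c g_C(2) less.prems(2)])
    qed
    have "card I = card C + card (I - C)"
      using C(1) less.prems(1) by (simp add: card_Diff_subset card_mono finite_subset)
    moreover have "{s \<in> Pi\<^sub>E I B. realizes_pattern g f I s} = low \<union> high"
      unfolding low_def high_def by auto
    then have "card {s \<in> Pi\<^sub>E I B. realizes_pattern g f I s} \<le> card low + card high"
      by (simp add: card_Un_le)
    ultimately have "card {s \<in> Pi\<^sub>E I B. realizes_pattern g f I s} < m * card I * real n ^ (card I - 1)"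
      using low_bound high_bound by (simp add: algebra_simps)
    with less.prems(5) show False by simp
  qed
qed

definition rank_on :: "'a set \<Rightarrow> 'a rel \<Rightarrow> 'a \<Rightarrow> nat" where
  "rank_on A r x = card {z \<in> A. (z, x) \<in> r}"

lemma quasi_order_on_iff_rank_le:
  assumes "quasi_order_on A r" "finite A" "x \<in> A" "y \<in> A"
  shows "(x, y) \<in> r \<longleftrightarrow> rank_on A r x \<le> rank_on A r y"
proof -
  have trans: "trans r" and refl: "(x, x) \<in> r"
    using assms(1,3) by (simp_all add: quasi_order_on_def preorder_on_def refl_on_def)
  have total: "(x, y) \<in> r \<or> (y, x) \<in> r"
    using assms(1,3,4) refl by (cases "x = y") (auto simp: quasi_order_on_def total_on_def)
  show ?thesis
  proof
    assume "(x, y) \<in> r"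
    then have "{z \<in> A. (z, x) \<in> r} \<subseteq> {z \<in> A. (z, y) \<in> r}"
      by (auto intro: transD[OF trans])
    then show "rank_on A r x \<le> rank_on A r y"
      unfolding rank_on_def using assms(2) by (intro card_mono) auto
  next
    assume "rank_on A r x \<le> rank_on A r y"
    show "(x, y) \<in> r"
    proof (rule ccontr)
      assume "(x, y) \<notin> r"
      then have "(y, x) \<in> r" using total by blast
      then have "{z \<in> A. (z, y) \<in> r} \<subseteq> {z \<in> A. (z, x) \<in> r}"
        by (auto intro: transD[OF trans])
      moreover have "x \<in> {z \<in> A. (z, x) \<in> r} - {z \<in> A. (z, y) \<in> r}"
        using refl assms(3) \<open>(x, y) \<notin> r\<close> by simp
      ultimately have "rank_on A r y < rank_on A r x"
        unfolding rank_on_def using assms(2) by (intro psubset_card_mono) auto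
      with \<open>rank_on A r x \<le> rank_on A r y\<close> show False by simp
    qed
  qed
qed

lemma realizes_pattern_rank_on_iff:
  assumes "quasi_order_on I q" "quasi_order_on A r" "finite I" "finite A" "\<forall>i\<in>I. s i \<in> A"
  shows "realizes_pattern (rank_on I q) (rank_on A r) I s \<longleftrightarrow> (\<forall>i\<in>I. \<forall>j\<in>I. (s i, s j) \<in> r \<longleftrightarrow> (i, j) \<in> q)"
  using assms quasi_order_on_iff_rank_le[OF assms(1,3)] quasi_order_on_iff_rank_le[OF assms(2,4)]
  unfolding realizes_pattern_def by auto

theorem lemma5p6:
  fixes k n :: nat and \<gamma> :: real and Rk R :: "nat rel"
  assumes "k > 0" and "n > 0" and "\<gamma> > 0"
    and "quasi_order_on {1..k} Rk"
    and "quasi_order_on {1..k*n} R"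
    and "real (card {s \<in> Pi\<^sub>E {1..k} (\<lambda>i. {(i-1)*n+1..i*n}).
            \<forall>i\<in>{1..k}. \<forall>j\<in>{1..k}. (s i, s j) \<in> R \<longleftrightarrow> (i, j) \<in> Rk})
          \<ge> \<gamma> * real k * real n ^ k"
  shows "\<exists>S :: nat \<Rightarrow> nat set.
           (\<forall>i\<in>{1..k}. S i \<subseteq> {(i-1)*n+1..i*n} \<and> real (card (S i)) \<ge> \<gamma> * real n) \<and>
           (\<forall>s\<in>Pi\<^sub>E {1..k} S. \<forall>i\<in>{1..k}. \<forall>j\<in>{1..k}. (s i, s j) \<in> R \<longleftrightarrow> (i, j) \<in> Rk)"
proof -
  define B where "B i = {(i-1)*n+1..i*n}" for i
  let ?f = "rank_on {1..k*n} R" and ?g = "rank_on {1..k} Rk"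
  have pattern_iff: "(\<forall>i\<in>{1..k}. \<forall>j\<in>{1..k}. (s i, s j) \<in> R \<longleftrightarrow> (i, j) \<in> Rk)
      \<longleftrightarrow> realizes_pattern ?g ?f {1..k} s" if "s \<in> Pi {1..k} B" for s
  proof (rule realizes_pattern_rank_on_iff[OF assms(4,5), symmetric])
    show "\<forall>i\<in>{1..k}. s i \<in> {1..k*n}"
    proof
      fix i assume i: "i \<in> {1..k}"
      then have "s i \<in> {(i-1)*n+1..i*n}" using that unfolding B_def by blast
      moreover have "i * n \<le> k * n" using i by simp
      ultimately show "s i \<in> {1..k*n}" unfolding atLeastAtMost_iff by linarith
    qed
  qed simp_all
  have "\<gamma> * n * card {1..k} * n ^ (card {1..k} - 1) = \<gamma> * k * n ^ k"
    using assms(1) by (simp add: power_eq_if)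
  also have "\<dots> \<le> card {s \<in> Pi\<^sub>E {1..k} B. realizes_pattern ?g ?f {1..k} s}"
    using assms(6) pattern_iff unfolding B_def[symmetric] by (simp add: PiE_def cong: conj_cong)
  finally have "large_pattern_sets ?g ?f {1..k} B (\<gamma> * n)"
    using assms(2,3) by (intro many_pattern_tuples_imp_large_pattern_sets) (auto simp: B_def diff_mult_distrib)
  then obtain S where S: "\<forall>i\<in>{1..k}. S i \<subseteq> B i \<and> \<gamma> * n \<le> card (S i)"
    and pattern: "\<forall>s\<in>Pi\<^sub>E {1..k} S. realizes_pattern ?g ?f {1..k} s"
    unfolding large_pattern_sets_def by blast
  have "s \<in> Pi {1..k} B" if "s \<in> Pi\<^sub>E {1..k} S" for s
    using that S by (auto simp: PiE_iff)
  with S pattern pattern_iff show ?thesis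
    unfolding B_def by blast
qed

end
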